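(* Let $P_Z$ be a distribution on $\mathcal{Z}$. Let $\tilde S=(\tilde Z_1,\ldots,\tilde Z_{2n})$ consist of $2n$ i.i.d. samples from $P_Z$, let $U=(U_1,\ldots,U_n)$ be i.i.d. Bernoulli$(1/2)$ random variables independent of $\tilde S$, let $Z_i=\tilde Z_{i+U_in}$ and $S=(Z_1,\ldots,Z_n)$, and let $W\in\mathcal{W}$ be produced from $S$ by a learning algorithm $P_{W|S}$. Let $\ell:\mathcal{W}\times\mathcal{Z}\to\mathbb{R}$ be a loss function such that $(\mathcal{W},\rho)$ is Polish and $w\mapsto\ell(w,z)$ is $L$-Lipschitz under $\rho$ for every $z\in\mathcal{Z}$. Let $\tilde S_i=(\tilde Z_i,\tilde Z_{i+n})$. Then $$\big|\overline{\mathrm{gen}}(W,S)\big|\le \frac{2L}{n}\sum_{i=1}^n\mathbb{E}\big[\mathbb{W}(P_{W|\tilde S_i,U_i},P_{W|\tilde S_i})\big].$$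
   Context: Population risk $\mathscr{L}_{P_Z}(w)=\mathbb{E}[\ell(w,Z)]$, $Z\sim P_Z$; empirical risk $\mathscr{L}_s(w)=\frac1n\sum_{i=1}^n\ell(w,z_i)$; $\overline{\mathrm{gen}}(W,S)=\mathbb{E}[\mathscr{L}_{P_Z}(W)-\mathscr{L}_S(W)]$. $L$-Lipschitz under $\rho$ means $|f(x)-f(y)|\le L\rho(x,y)$. $\mathbb{W}$ is the order-1 Wasserstein distance with respect to $\rho$: $\mathbb{W}(P,Q)=\inf_{R\in\Pi(P,Q)}\int\rho(x,y)\,dR(x,y)$. *)

theory Defs
  imports "HOL-Probability.Probability"
begin

definition couplings :: "'w::metric_space measure \<Rightarrow> 'w measure \<Rightarrow> ('w \<times> 'w) measure set" where
  "couplings P Q = {R. sets R = sets (borel \<Otimes>\<^sub>M borel) \<and>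
       distr R borel fst = P \<and> distr R borel snd = Q}"

definition wasserstein1 :: "'w::metric_space measure \<Rightarrow> 'w measure \<Rightarrow> ennreal" where
  "wasserstein1 P Q = (INF R\<in>couplings P Q. \<integral>\<^sup>+ p. ennreal (dist (fst p) (snd p)) \<partial>R)"

definition is_cond_distr ::
  "'o measure \<Rightarrow> 'a measure \<Rightarrow> ('o \<Rightarrow> 'a) \<Rightarrow> 'b measure \<Rightarrow> ('o \<Rightarrow> 'b) \<Rightarrow> ('a \<Rightarrow> 'b measure) \<Rightarrow> bool" where
  "is_cond_distr M MX X N Y kappa \<longleftrightarrow>
     X \<in> measurable M MX \<and> Y \<in> measurable M N \<and>
     kappa \<in> measurable MX (prob_algebra N) \<and>
     (\<forall>A\<in>sets MX. \<forall>B\<in>sets N.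
        emeasure M {\<omega>\<in>space M. X \<omega> \<in> A \<and> Y \<omega> \<in> B} =
        (\<integral>\<^sup>+ x. indicator A x * emeasure (kappa x) B \<partial>(distr M MX X)))"

definition sel_sample :: "nat \<Rightarrow> (nat \<Rightarrow> 'z) \<Rightarrow> (nat \<Rightarrow> bool) \<Rightarrow> nat \<Rightarrow> 'z" where
  "sel_sample n zt u = (\<lambda>i\<in>{..<n}. zt (if u i then i + n else i))"

definition supersample_space ::
  "'z measure \<Rightarrow> nat \<Rightarrow> ((nat \<Rightarrow> 'z) \<Rightarrow> 'w::topological_space measure)
     \<Rightarrow> ((nat \<Rightarrow> 'z) \<times> (nat \<Rightarrow> bool) \<times> 'w) measure" where
  "supersample_space PZ n K =
     PiM {..<2*n} (\<lambda>_. PZ) \<bind> (\<lambda>zt.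
     PiM {..<n} (\<lambda>_. measure_pmf (bernoulli_pmf (1/2))) \<bind> (\<lambda>u.
     K (sel_sample n zt u) \<bind> (\<lambda>w.
     return (PiM {..<2*n} (\<lambda>_. PZ) \<Otimes>\<^sub>M
             (PiM {..<n} (\<lambda>_. measure_pmf (bernoulli_pmf (1/2))) \<Otimes>\<^sub>M borel)) (zt, u, w))))"

end

theory Submission
  imports Defs
begin

(* Fix an index i. Hence the population risk is the
   expected loss of W at the ghost sample, and the expected generalization gap is the mean over i
   of E[g(S~_i, U_i, W)], where g is the loss at the ghost sample minus the loss at the training
   sample. Now g changes sign when U_i is flipped, and U_i is a fair coin independent of S~_i, so
   integrating g against any kernel of S~_i alone, in particular P_{W|S~_i}, yields a quantity of
   mean zero. Subtracting it from E[g] = E[int g dP_{W|S~_i,U_i}] and using that g(s, u, .) is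
   2L-Lipschitz, the easy direction of Kantorovich-Rubinstein duality bounds the i-th term by
   2L E[W(P_{W|S~_i,U_i}, P_{W|S~_i})]. *)

section \<open>Elementary integral estimates\<close>

lemma abs_integral_le_nn_integral_abs_diff:
  fixes f g :: "'a \<Rightarrow> real"
  assumes f: "integrable M f" and g: "g \<in> borel_measurable M" and "(\<integral>x. g x \<partial>M) = 0"
  shows "ennreal \<bar>\<integral>x. f x \<partial>M\<bar> \<le> (\<integral>\<^sup>+x. ennreal \<bar>f x - g x\<bar> \<partial>M)"
proof (cases "integrable M g")
  case True
  then have "\<bar>\<integral>x. f x \<partial>M\<bar> = \<bar>\<integral>x. f x - g x \<partial>M\<bar>"
    using f \<open>(\<integral>x. g x \<partial>M) = 0\<close> by simp
  also have "\<dots> \<le> (\<integral>x. \<bar>f x - g x\<bar> \<partial>M)"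
    by (rule integral_abs_bound)
  finally show ?thesis
    using f True by (simp add: ennreal_leI nn_integral_eq_integral)
next
  case False
  then have "\<not> integrable M (\<lambda>x. f x - g x)"
    using Bochner_Integration.integrable_diff[OF f, of "\<lambda>x. f x - g x"] by auto
  then have "(\<integral>\<^sup>+x. ennreal \<bar>f x - g x\<bar> \<partial>M) = \<infinity>"
    using f g by (simp add: integrable_iff_bounded less_top[symmetric])
  then show ?thesis
    by simp
qed

(* Unlike nn_integral_cmult, no measurability of g is required. *)
lemma nn_integral_le_ennreal_cmult:
  assumes f: "f \<in> borel_measurable M" and le: "\<And>x. x \<in> space M \<Longrightarrow> f x \<le> ennreal c * g x"
  shows "(\<integral>\<^sup>+x. f x \<partial>M) \<le> ennreal c * (\<integral>\<^sup>+x. g x \<partial>M)"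
proof (cases "c > 0")
  case True
  have "(\<integral>\<^sup>+x. f x \<partial>M) = ennreal c * (\<integral>\<^sup>+x. f x / ennreal c \<partial>M)"
    using True f by (simp add: nn_integral_divide ennreal_times_divide mult.commute[of "ennreal c"] ennreal_mult_divide_eq)
  also have "\<dots> \<le> ennreal c * (\<integral>\<^sup>+x. g x \<partial>M)"
    using True le by (intro mult_left_mono nn_integral_mono divide_le_posI_ennreal) simp_all
  finally show ?thesis .
next
  case False
  then have "ennreal c = 0"
    by (simp add: ennreal_eq_0_iff)
  then have "f x = 0" if "x \<in> space M" for x
    using le[OF that] by simp
  then have "(\<integral>\<^sup>+x. f x \<partial>M) = 0"
    by (simp cong: nn_integral_cong)
  then show ?thesis
    by simp
qed

lemma integral_diff_mean:
  fixes f :: "'a \<Rightarrow> real" and g :: "nat \<Rightarrow> 'a \<Rightarrow> real"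
  assumes f: "integrable M f" and g: "\<And>i. i < n \<Longrightarrow> integrable M (g i)"
  shows "(\<integral>x. f x - (1 / real n) * (\<Sum>i<n. g i x) \<partial>M) = (\<integral>x. f x \<partial>M) - (1 / real n) * (\<Sum>i<n. \<integral>x. g i x \<partial>M)"
proof -
  have "integrable M (\<lambda>x. \<Sum>i<n. g i x)"
    using g by (intro Bochner_Integration.integrable_sum) simp
  then have "(\<integral>x. f x - (1 / real n) * (\<Sum>i<n. g i x) \<partial>M) = (\<integral>x. f x \<partial>M) - (1 / real n) * (\<integral>x. (\<Sum>i<n. g i x) \<partial>M)"
    using f by simp
  also have "(\<integral>x. (\<Sum>i<n. g i x) \<partial>M) = (\<Sum>i<n. \<integral>x. g i x \<partial>M)"
    using g by (intro Bochner_Integration.integral_sum) simp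
  finally show ?thesis .
qed

lemma ennreal_abs_mean_le:
  fixes a :: "nat \<Rightarrow> real" and b :: "nat \<Rightarrow> ennreal"
  assumes ab: "\<And>i. i < n \<Longrightarrow> ennreal \<bar>a i\<bar> \<le> ennreal c * b i" and c: "0 \<le> c"
  shows "ennreal \<bar>(1 / real n) * (\<Sum>i<n. a i)\<bar> \<le> ennreal (c / real n) * (\<Sum>i<n. b i)"
proof -
  have "ennreal \<bar>(1 / real n) * (\<Sum>i<n. a i)\<bar> \<le> ennreal (1 / real n) * ennreal (\<Sum>i<n. \<bar>a i\<bar>)"
    by (simp add: abs_mult sum_abs divide_right_mono ennreal_leI flip: ennreal_mult)
  also have "\<dots> = ennreal (1 / real n) * (\<Sum>i<n. ennreal \<bar>a i\<bar>)"
    by (simp add: sum_ennreal)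
  also have "\<dots> \<le> ennreal (1 / real n) * (\<Sum>i<n. ennreal c * b i)"
    by (intro mult_left_mono sum_mono ab) auto
  also have "\<dots> = ennreal (1 / real n) * ennreal c * (\<Sum>i<n. b i)"
    by (simp add: sum_distrib_left mult.assoc)
  also have "\<dots> = ennreal (c / real n) * (\<Sum>i<n. b i)"
    using c by (simp flip: ennreal_mult)
  finally show ?thesis .
qed

lemma emeasure_distr_nn_integral:
  assumes "g \<in> M \<rightarrow>\<^sub>M N" and "A \<in> sets N"
  shows "emeasure (distr M N g) A = (\<integral>\<^sup>+x. indicator A (g x) \<partial>M)"
  using nn_integral_distr[OF assms(1), of "indicator A"] assms(2) by simp

lemma (in product_prob_space) nn_integral_PiM_mult_indep_component:
  assumes I: "finite I" "j \<in> I"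
    and \<phi>[measurable]: "\<phi> \<in> borel_measurable (M j)" and G[measurable]: "G \<in> borel_measurable (PiM I M)"
    and G_indep: "\<And>x y. G (x(j := y)) = G x"
  shows "(\<integral>\<^sup>+x. \<phi> (x j) * G x \<partial>PiM I M) = (\<integral>\<^sup>+y. \<phi> y \<partial>M j) * (\<integral>\<^sup>+x. G x \<partial>PiM I M)"
proof -
  define R where "R = I - {j}"
  have R: "finite R" "j \<notin> R" and I_eq: "I = insert j R"
    using I by (auto simp: R_def)
  obtain y0 where y0: "y0 \<in> space (M j)"
    using M.not_empty by blast
  have "(\<lambda>x. G (x(j := y0))) \<in> borel_measurable (PiM R M)"
    using y0 I_eq by (intro measurable_compose[OF measurable_fun_upd[where J=R] G]) auto
  then have G_R: "G \<in> borel_measurable (PiM R M)"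
    by (simp add: G_indep)
  have split: "(\<integral>\<^sup>+x. \<psi> (x j) * G x \<partial>PiM I M) = (\<integral>\<^sup>+y. \<psi> y \<partial>M j) * (\<integral>\<^sup>+x. G x \<partial>PiM R M)"
    if [measurable]: "\<psi> \<in> borel_measurable (M j)" for \<psi>
  proof -
    have "(\<lambda>x. \<psi> (x j) * G x) \<in> borel_measurable (PiM I M)"
      using I by measurable
    then have "(\<integral>\<^sup>+x. \<psi> (x j) * G x \<partial>PiM I M) = (\<integral>\<^sup>+x. \<integral>\<^sup>+y. \<psi> ((x(j := y)) j) * G (x(j := y)) \<partial>M j \<partial>PiM R M)"
      unfolding I_eq by (rule product_nn_integral_insert[OF R])
    also have "\<dots> = (\<integral>\<^sup>+x. \<integral>\<^sup>+y. \<psi> y * G x \<partial>M j \<partial>PiM R M)"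
      by (simp add: G_indep)
    also have "\<dots> = (\<integral>\<^sup>+x. (\<integral>\<^sup>+y. \<psi> y \<partial>M j) * G x \<partial>PiM R M)"
      by (simp add: nn_integral_multc)
    also have "\<dots> = (\<integral>\<^sup>+y. \<psi> y \<partial>M j) * (\<integral>\<^sup>+x. G x \<partial>PiM R M)"
      by (rule nn_integral_cmult[OF G_R])
    finally show ?thesis .
  qed
  from split[of "\<lambda>_. 1"] have "(\<integral>\<^sup>+x. G x \<partial>PiM I M) = (\<integral>\<^sup>+x. G x \<partial>PiM R M)"
    by (simp add: M.emeasure_space_1)
  with split[OF \<phi>] show ?thesis
    by simp
qed

section \<open>Lipschitz functions and the Wasserstein distance\<close>

lemma integral_diff_le_wasserstein1:
  fixes f :: "'w::{metric_space, second_countable_topology} \<Rightarrow> real"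
  assumes lip: "1-lipschitz_on UNIV f"
  shows "ennreal \<bar>(\<integral>x. f x \<partial>P) - (\<integral>x. f x \<partial>Q)\<bar> \<le> wasserstein1 P Q"
  unfolding wasserstein1_def
proof (rule INF_greatest)
  fix R assume "R \<in> couplings P Q"
  then have sets_R: "sets R = sets (borel \<Otimes>\<^sub>M borel)"
    and P: "P = distr R borel fst" and Q: "Q = distr R borel snd"
    by (auto simp: couplings_def)
  note measurable_cong_sets[OF sets_R refl, measurable_cong]
  have f[measurable]: "f \<in> borel_measurable borel"
    using lipschitz_on_continuous_on[OF lip] by (rule borel_measurable_continuous_onI)
  have dist_f: "\<bar>f x - f y\<bar> \<le> dist x y" for x y
    using lipschitz_onD[OF lip] by (simp add: dist_real_def)
  have integral_P: "(\<integral>x. f x \<partial>P) = (\<integral>p. f (fst p) \<partial>R)"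
    and integral_Q: "(\<integral>x. f x \<partial>Q) = (\<integral>p. f (snd p) \<partial>R)"
    unfolding P Q by (simp_all add: integral_distr)
  show "ennreal \<bar>(\<integral>x. f x \<partial>P) - (\<integral>x. f x \<partial>Q)\<bar> \<le> (\<integral>\<^sup>+p. ennreal (dist (fst p) (snd p)) \<partial>R)"
  proof (cases "integrable R (\<lambda>p. dist (fst p) (snd p))")
    case False
    then show ?thesis
      by (simp add: integrable_iff_bounded less_top[symmetric])
  next
    case dist_int: True
    have diff_int: "integrable R (\<lambda>p. f (fst p) - f (snd p))"
      by (rule Bochner_Integration.integrable_bound[OF dist_int]) (auto simp: dist_f)
    show ?thesis
    proof (cases "integrable R (\<lambda>p. f (fst p))")
      case True
      then have "integrable R (\<lambda>p. f (snd p))"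
        using Bochner_Integration.integrable_diff[OF True diff_int] by simp
      then have "\<bar>(\<integral>x. f x \<partial>P) - (\<integral>x. f x \<partial>Q)\<bar> = \<bar>\<integral>p. f (fst p) - f (snd p) \<partial>R\<bar>"
        using True by (simp add: integral_P integral_Q)
      also have "\<dots> \<le> (\<integral>p. dist (fst p) (snd p) \<partial>R)"
        by (rule order_trans[OF integral_abs_bound integral_mono[OF _ dist_int]])
           (use diff_int dist_f in auto)
      finally show ?thesis
        using dist_int by (simp add: nn_integral_eq_integral ennreal_leI)
    next
      case False
      then have "\<not> integrable R (\<lambda>p. f (snd p))"
        using Bochner_Integration.integrable_add[OF _ diff_int, of "\<lambda>p. f (snd p)"] by auto
      with False show ?thesis
        by (simp add: integral_P integral_Q not_integrable_integral_eq)
    qed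
  qed
qed

lemma lipschitz_integral_diff_le_wasserstein1:
  fixes f :: "'w::{metric_space, second_countable_topology} \<Rightarrow> real"
  assumes "prob_space P" "prob_space Q" and lip: "C-lipschitz_on UNIV f"
  shows "ennreal \<bar>(\<integral>x. f x \<partial>P) - (\<integral>x. f x \<partial>Q)\<bar> \<le> ennreal C * wasserstein1 P Q"
proof (cases "C = 0")
  case True
  then have "f = (\<lambda>_. f undefined)"
    using lipschitz_onD[OF lip] by fastforce
  then have "(\<integral>x. f x \<partial>P) = (\<integral>x. f x \<partial>Q)"
    using assms(1,2) by (metis lebesgue_integral_const prob_space.prob_space)
  then show ?thesis
    by simp
next
  case False
  then have C: "C > 0"
    using lipschitz_on_nonneg[OF lip] by simp
  have "(1 / C * C)-lipschitz_on UNIV (\<lambda>x. 1 / C * f x)"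
    using C lip by (intro lipschitz_on_cmult_real_nonneg) auto
  then have "ennreal \<bar>(\<integral>x. f x / C \<partial>P) - (\<integral>x. f x / C \<partial>Q)\<bar> \<le> wasserstein1 P Q"
    using C by (intro integral_diff_le_wasserstein1) simp
  then have "ennreal C * ennreal (\<bar>(\<integral>x. f x \<partial>P) - (\<integral>x. f x \<partial>Q)\<bar> / C) \<le> ennreal C * wasserstein1 P Q"
    using C by (simp add: diff_divide_distrib[symmetric] mult_left_mono)
  then show ?thesis
    using C by (simp flip: ennreal_mult)
qed

section \<open>Integrals against kernels and conditional distributions\<close>

context
  fixes M :: "'a measure" and N :: "'a \<Rightarrow> 'b measure" and B :: "'b measure" and f :: "'b \<Rightarrow> real"
  assumes N[measurable]: "N \<in> M \<rightarrow>\<^sub>M subprob_algebra B"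
    and f[measurable]: "f \<in> borel_measurable B"
    and integrable_f: "integrable (M \<bind> N) f"
begin

lemma nn_integral_bind_norm_finite: "(\<integral>\<^sup>+x. \<integral>\<^sup>+y. norm (f y) \<partial>N x \<partial>M) < \<infinity>"
  using integrable_f by (simp add: integrable_iff_bounded nn_integral_bind[OF _ N])

lemma AE_integrable_bind: "AE x in M. integrable (N x) f"
proof -
  have "AE x in M. (\<integral>\<^sup>+y. norm (f y) \<partial>N x) \<noteq> \<infinity>"
    using nn_integral_bind_norm_finite by (intro nn_integral_PInf_AE) auto
  then show ?thesis
  proof (rule AE_mp, intro AE_I2 impI)
    fix x assume "x \<in> space M" "(\<integral>\<^sup>+y. norm (f y) \<partial>N x) \<noteq> \<infinity>"
    moreover have "f \<in> borel_measurable (N x)"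
      by (subst measurable_cong_sets[OF sets_kernel[OF N \<open>x \<in> space M\<close>] refl]) (rule f)
    ultimately show "integrable (N x) f"
      by (simp add: integrable_iff_bounded less_top)
  qed
qed

lemma integrable_integral_bind: "integrable M (\<lambda>x. \<integral>y. f y \<partial>N x)"
proof (rule integrableI_bounded)
  show "(\<lambda>x. \<integral>y. f y \<partial>N x) \<in> borel_measurable M"
    by (rule measurable_compose[OF N integral_measurable_subprob_algebra[OF f]])
  have "AE x in M. norm (\<integral>y. f y \<partial>N x) \<le> (\<integral>\<^sup>+y. norm (f y) \<partial>N x)"
    using AE_integrable_bind by eventually_elim (rule integral_norm_bound_ennreal)
  then have "(\<integral>\<^sup>+x. norm (\<integral>y. f y \<partial>N x) \<partial>M) \<le> (\<integral>\<^sup>+x. \<integral>\<^sup>+y. norm (f y) \<partial>N x \<partial>M)"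
    by (rule nn_integral_mono_AE)
  then show "(\<integral>\<^sup>+x. norm (\<integral>y. f y \<partial>N x) \<partial>M) < \<infinity>"
    using nn_integral_bind_norm_finite by (rule le_less_trans)
qed

end

lemma integral_bind_nonneg:
  fixes f :: "'b \<Rightarrow> real"
  assumes N[measurable]: "N \<in> M \<rightarrow>\<^sub>M subprob_algebra B" and f[measurable]: "f \<in> borel_measurable B"
    and "integrable (M \<bind> N) f" and nonneg: "\<And>y. 0 \<le> f y"
  shows "(\<integral>y. f y \<partial>(M \<bind> N)) = (\<integral>x. \<integral>y. f y \<partial>N x \<partial>M)"
proof -
  have "(\<integral>y. f y \<partial>(M \<bind> N)) = enn2real (\<integral>\<^sup>+y. f y \<partial>(M \<bind> N))"
    using \<open>integrable (M \<bind> N) f\<close> nonneg by (intro integral_eq_nn_integral) auto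
  also have "\<dots> = enn2real (\<integral>\<^sup>+x. \<integral>\<^sup>+y. f y \<partial>N x \<partial>M)"
    by (simp add: nn_integral_bind[OF _ N, of "\<lambda>y. ennreal (f y)"])
  also have "\<dots> = (\<integral>x. \<integral>y. f y \<partial>N x \<partial>M)"
  proof (rule enn2real_nn_integral_eq_integral)
    show "AE x in M. (\<integral>\<^sup>+y. f y \<partial>N x) = ennreal (\<integral>y. f y \<partial>N x)"
      using AE_integrable_bind[OF N f \<open>integrable (M \<bind> N) f\<close>]
      by eventually_elim (simp add: nn_integral_eq_integral nonneg)
    show "(\<lambda>x. \<integral>y. f y \<partial>N x) \<in> borel_measurable M"
      by (rule measurable_compose[OF N integral_measurable_subprob_algebra[OF f]])
  qed (simp add: nonneg)
  finally show ?thesis .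
qed

lemma integral_bind_integrable:
  fixes f :: "'b \<Rightarrow> real"
  assumes N[measurable]: "N \<in> M \<rightarrow>\<^sub>M subprob_algebra B" and f[measurable]: "f \<in> borel_measurable B"
    and int: "integrable (M \<bind> N) f"
  shows "(\<integral>y. f y \<partial>(M \<bind> N)) = (\<integral>x. \<integral>y. f y \<partial>N x \<partial>M)"
proof -
  define fp fn where "fp = (\<lambda>y. max 0 (f y))" and "fn = (\<lambda>y. max 0 (- f y))"
  have fp[measurable]: "fp \<in> borel_measurable B" and fn[measurable]: "fn \<in> borel_measurable B"
    unfolding fp_def fn_def by measurable
  have int_p: "integrable (M \<bind> N) fp" and int_n: "integrable (M \<bind> N) fn"
    unfolding fp_def fn_def using int by auto
  have f_eq: "f = (\<lambda>y. fp y - fn y)"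
    by (auto simp: fp_def fn_def max_def)
  have "(\<integral>y. f y \<partial>(M \<bind> N)) = (\<integral>y. fp y \<partial>(M \<bind> N)) - (\<integral>y. fn y \<partial>(M \<bind> N))"
    unfolding f_eq using int_p int_n by (rule Bochner_Integration.integral_diff)
  also have "\<dots> = (\<integral>x. \<integral>y. fp y \<partial>N x \<partial>M) - (\<integral>x. \<integral>y. fn y \<partial>N x \<partial>M)"
    using integral_bind_nonneg[OF N fp int_p] integral_bind_nonneg[OF N fn int_n]
    by (simp add: fp_def fn_def)
  also have "\<dots> = (\<integral>x. (\<integral>y. fp y \<partial>N x) - (\<integral>y. fn y \<partial>N x) \<partial>M)"
    using integrable_integral_bind[OF N fp int_p] integrable_integral_bind[OF N fn int_n]
    by (rule Bochner_Integration.integral_diff[symmetric])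
  also have "\<dots> = (\<integral>x. \<integral>y. f y \<partial>N x \<partial>M)"
  proof (rule integral_cong_AE)
    show "AE x in M. (\<integral>y. fp y \<partial>N x) - (\<integral>y. fn y \<partial>N x) = (\<integral>y. f y \<partial>N x)"
      using AE_integrable_bind[OF N f int]
    proof eventually_elim
      case (elim x)
      then have "integrable (N x) fp" "integrable (N x) fn"
        by (simp_all add: fp_def fn_def)
      then show ?case
        by (simp add: f_eq)
    qed
  qed measurable
  finally show ?thesis .
qed

lemma integral_measurable_subprob_algebra2:
  fixes f :: "'a \<Rightarrow> 'b \<Rightarrow> real"
  assumes f[measurable]: "(\<lambda>(x, y). f x y) \<in> borel_measurable (M \<Otimes>\<^sub>M N)"
    and L[measurable]: "L \<in> M \<rightarrow>\<^sub>M subprob_algebra N"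
  shows "(\<lambda>x. \<integral>y. f x y \<partial>L x) \<in> borel_measurable M"
proof -
  note measurable_distr2[measurable]
  have "(\<lambda>x. \<integral>p. (\<lambda>(x, y). f x y) p \<partial>distr (L x) (M \<Otimes>\<^sub>M N) (Pair x)) \<in> borel_measurable M"
    by measurable
  moreover have "(\<integral>p. (\<lambda>(x, y). f x y) p \<partial>distr (L x) (M \<Otimes>\<^sub>M N) (Pair x)) = (\<integral>y. f x y \<partial>L x)"
    if "x \<in> space M" for x
    using measurable_cong_sets[OF sets_kernel[OF L that] refl] that by (simp add: integral_distr)
  ultimately show ?thesis
    by (simp cong: measurable_cong)
qed

context
  fixes M :: "'o measure" and MX :: "'a measure" and X :: "'o \<Rightarrow> 'a"
    and N :: "'b measure" and Y :: "'o \<Rightarrow> 'b" and \<kappa> :: "'a \<Rightarrow> 'b measure"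
  assumes M: "prob_space M" and cd: "is_cond_distr M MX X N Y \<kappa>"
begin

lemma is_cond_distr_measurable:
  "X \<in> M \<rightarrow>\<^sub>M MX" "Y \<in> M \<rightarrow>\<^sub>M N" "\<kappa> \<in> MX \<rightarrow>\<^sub>M subprob_algebra N"
  using cd by (auto simp: is_cond_distr_def intro: measurable_prob_algebraD)

lemma measurable_graph_kernel:
  "(\<lambda>x. distr (\<kappa> x) (MX \<Otimes>\<^sub>M N) (Pair x)) \<in> MX \<rightarrow>\<^sub>M subprob_algebra (MX \<Otimes>\<^sub>M N)"
  by (rule measurable_distr2[where M=N, OF _ is_cond_distr_measurable(3)]) measurable
lemma space_distr_cond_nonempty: "space (distr M MX X) \<noteq> {}"
  using prob_space.not_empty[OF prob_space.prob_space_distr[OF M is_cond_distr_measurable(1)]] .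

lemma distr_pair_eq_bind_kernel:
  "distr M (MX \<Otimes>\<^sub>M N) (\<lambda>\<omega>. (X \<omega>, Y \<omega>)) = distr M MX X \<bind> (\<lambda>x. distr (\<kappa> x) (MX \<Otimes>\<^sub>M N) (Pair x))"
    (is "?L = ?R")
proof (rule measure_eqI_generator_eq[OF Int_stable_pair_measure_generator[of MX N],
      where \<Omega>="space MX \<times> space N" and A="\<lambda>_. space MX \<times> space N"])
  interpret prob_space M by (rule M)
  note is_cond_distr_measurable[measurable]
  show "emeasure ?L (space MX \<times> space N) \<noteq> \<infinity>"
    by (simp add: emeasure_distr)
  have kernel: "(\<lambda>x. distr (\<kappa> x) (MX \<Otimes>\<^sub>M N) (Pair x)) \<in> distr M MX X \<rightarrow>\<^sub>M subprob_algebra (MX \<Otimes>\<^sub>M N)"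
    using measurable_graph_kernel by simp
  show "sets ?L = sigma_sets (space MX \<times> space N) {a \<times> b |a b. a \<in> sets MX \<and> b \<in> sets N}"
    by (simp add: sets_pair_measure)
  show "sets ?R = sigma_sets (space MX \<times> space N) {a \<times> b |a b. a \<in> sets MX \<and> b \<in> sets N}"
    using sets_bind[OF sets_kernel[OF kernel] space_distr_cond_nonempty] by (simp add: sets_pair_measure)
  fix S assume "S \<in> {a \<times> b |a b. a \<in> sets MX \<and> b \<in> sets N}"
  then obtain A B where S: "S = A \<times> B" and A: "A \<in> sets MX" and B: "B \<in> sets N"
    by auto
  have "emeasure ?L S = emeasure M {\<omega> \<in> space M. X \<omega> \<in> A \<and> Y \<omega> \<in> B}"
    using A B by (simp add: S emeasure_distr vimage_def Int_def conj_commute)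
  also have "\<dots> = (\<integral>\<^sup>+x. indicator A x * emeasure (\<kappa> x) B \<partial>distr M MX X)"
    using cd A B by (simp add: is_cond_distr_def)
  also have "\<dots> = (\<integral>\<^sup>+x. emeasure (distr (\<kappa> x) (MX \<Otimes>\<^sub>M N) (Pair x)) (A \<times> B) \<partial>distr M MX X)"
  proof (rule nn_integral_cong)
    fix x assume "x \<in> space (distr M MX X)"
    then have x: "x \<in> space MX" by simp
    have sets_\<kappa>: "sets (\<kappa> x) = sets N"
      using x by (rule sets_kernel[OF is_cond_distr_measurable(3)])
    have "emeasure (distr (\<kappa> x) (MX \<Otimes>\<^sub>M N) (Pair x)) (A \<times> B) = emeasure (\<kappa> x) (Pair x -` (A \<times> B) \<inter> space (\<kappa> x))"
      using A B x by (intro emeasure_distr) (simp_all add: measurable_cong_sets[OF sets_\<kappa> refl])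
    also have "\<dots> = indicator A x * emeasure (\<kappa> x) B"
      using sets.sets_into_space[OF B] sets_eq_imp_space_eq[OF sets_\<kappa>]
      by (cases "x \<in> A") (auto simp: Int_absorb2)
    finally show "indicator A x * emeasure (\<kappa> x) B = emeasure (distr (\<kappa> x) (MX \<Otimes>\<^sub>M N) (Pair x)) (A \<times> B)" ..
  qed
  also have "\<dots> = emeasure ?R S"
    using A B by (simp add: S emeasure_bind[OF space_distr_cond_nonempty kernel])
  finally show "emeasure ?L S = emeasure ?R S" .
qed (use sets.space_closed[of MX] sets.space_closed[of N] in auto)

lemma integral_cond_distr:
  fixes G :: "'a \<times> 'b \<Rightarrow> real"
  assumes G[measurable]: "G \<in> borel_measurable (MX \<Otimes>\<^sub>M N)"
    and int: "integrable M (\<lambda>\<omega>. G (X \<omega>, Y \<omega>))"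
  shows "integrable M (\<lambda>\<omega>. \<integral>y. G (X \<omega>, y) \<partial>\<kappa> (X \<omega>))"
    and "(\<integral>\<omega>. G (X \<omega>, Y \<omega>) \<partial>M) = (\<integral>\<omega>. \<integral>y. G (X \<omega>, y) \<partial>\<kappa> (X \<omega>) \<partial>M)"
proof -
  note is_cond_distr_measurable[measurable]
  let ?K = "\<lambda>x. distr (\<kappa> x) (MX \<Otimes>\<^sub>M N) (Pair x)"
  have kernel: "?K \<in> distr M MX X \<rightarrow>\<^sub>M subprob_algebra (MX \<Otimes>\<^sub>M N)"
    using measurable_graph_kernel by simp
  have inner: "(\<integral>p. G p \<partial>?K x) = (\<integral>y. G (x, y) \<partial>\<kappa> x)" if "x \<in> space MX" for x
    using measurable_cong_sets[OF sets_kernel[OF is_cond_distr_measurable(3) that] refl] that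
    by (simp add: integral_distr)
  have inner_meas: "(\<lambda>x. \<integral>y. G (x, y) \<partial>\<kappa> x) \<in> borel_measurable MX"
    by (rule integral_measurable_subprob_algebra2[where f="\<lambda>x y. G (x, y)" and N=N]) simp_all
  have int_bind: "integrable (distr M MX X \<bind> ?K) G"
    using int by (simp add: integrable_distr_eq flip: distr_pair_eq_bind_kernel)
  have "integrable (distr M MX X) (\<lambda>x. \<integral>p. G p \<partial>?K x)"
    using integrable_integral_bind[OF kernel G int_bind] .
  then have "integrable (distr M MX X) (\<lambda>x. \<integral>y. G (x, y) \<partial>\<kappa> x)"
    using Bochner_Integration.integrable_cong[OF refl, of "distr M MX X" "\<lambda>x. \<integral>p. G p \<partial>?K x" "\<lambda>x. \<integral>y. G (x, y) \<partial>\<kappa> x"] inner by simp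
  then show "integrable M (\<lambda>\<omega>. \<integral>y. G (X \<omega>, y) \<partial>\<kappa> (X \<omega>))"
    using inner_meas by (simp add: integrable_distr_eq)
  have "(\<integral>\<omega>. G (X \<omega>, Y \<omega>) \<partial>M) = (\<integral>p. G p \<partial>(distr M MX X \<bind> ?K))"
    by (simp add: integral_distr flip: distr_pair_eq_bind_kernel)
  also have "\<dots> = (\<integral>x. \<integral>p. G p \<partial>?K x \<partial>distr M MX X)"
    by (rule integral_bind_integrable[OF kernel G int_bind])
  also have "\<dots> = (\<integral>x. \<integral>y. G (x, y) \<partial>\<kappa> x \<partial>distr M MX X)"
    by (rule Bochner_Integration.integral_cong) (simp_all add: inner)
  also have "\<dots> = (\<integral>\<omega>. \<integral>y. G (X \<omega>, y) \<partial>\<kappa> (X \<omega>) \<partial>M)"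
    using inner_meas by (simp add: integral_distr)
  finally show "(\<integral>\<omega>. G (X \<omega>, Y \<omega>) \<partial>M) = (\<integral>\<omega>. \<integral>y. G (X \<omega>, y) \<partial>\<kappa> (X \<omega>) \<partial>M)" .
qed

end

section \<open>The supersample experiment\<close>

abbreviation fair_coin :: "bool measure" where
  "fair_coin \<equiv> measure_pmf (bernoulli_pmf (1/2))"

declare sets_measure_pmf_count_space[measurable_cong]

lemma measurable_sel_sample[measurable]:
  "(\<lambda>p. sel_sample n (fst p) (snd p)) \<in> PiM {..<2*n} (\<lambda>_. PZ) \<Otimes>\<^sub>M PiM {..<n} (\<lambda>_. fair_coin) \<rightarrow>\<^sub>M PiM {..<n} (\<lambda>_. PZ)"
  unfolding sel_sample_def by measurable

(* For x = ((z, z'), u): the loss at the member of the pair not selected by u minus the loss at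
   the selected one. *)
definition loss_gap :: "('w \<Rightarrow> 'z \<Rightarrow> real) \<Rightarrow> ('z \<times> 'z) \<times> bool \<Rightarrow> 'w \<Rightarrow> real" where
  "loss_gap loss x w = (if snd x then 1 else -1) * (loss w (fst (fst x)) - loss w (snd (fst x)))"

lemma loss_gap_flip: "loss_gap loss (s, \<not> u) w = - loss_gap loss (s, u) w"
  by (simp add: loss_gap_def)

lemma lipschitz_loss_gap:
  assumes "L-lipschitz_on UNIV (\<lambda>w. loss w z)" "L-lipschitz_on UNIV (\<lambda>w. loss w z')"
  shows "(2 * L)-lipschitz_on UNIV (loss_gap loss ((z, z'), u))"
proof -
  have "(1 * (L + L))-lipschitz_on UNIV (\<lambda>w. (if u then 1 else -1) * (loss w z - loss w z'))"
    by (intro lipschitz_on_cmult_real_upper lipschitz_on_diff assms) simp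
  then show ?thesis
    by (simp add: loss_gap_def[abs_def])
qed

lemma measurable_loss_gap:
  assumes [measurable]: "case_prod loss \<in> borel_measurable (borel \<Otimes>\<^sub>M M)"
  shows "(\<lambda>(x, w). loss_gap loss x w) \<in> borel_measurable (((M \<Otimes>\<^sub>M M) \<Otimes>\<^sub>M count_space UNIV) \<Otimes>\<^sub>M borel)"
  unfolding loss_gap_def by measurable

locale supersample =
  fixes PZ :: "'z measure" and n :: nat and K :: "(nat \<Rightarrow> 'z) \<Rightarrow> 'w::polish_space measure"
  assumes prob_space_PZ: "prob_space PZ"
    and K_measurable[measurable]: "K \<in> PiM {..<n} (\<lambda>_. PZ) \<rightarrow>\<^sub>M prob_algebra borel"
begin

abbreviation "PZt \<equiv> PiM {..<2*n} (\<lambda>_. PZ)"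
abbreviation "PU \<equiv> PiM {..<n} (\<lambda>_. fair_coin)"
abbreviation "\<Omega> \<equiv> PZt \<Otimes>\<^sub>M (PU \<Otimes>\<^sub>M (borel :: 'w measure))"
abbreviation "PZUW \<equiv> supersample_space PZ n K"
abbreviation "SU_space \<equiv> (PZ \<Otimes>\<^sub>M PZ) \<Otimes>\<^sub>M count_space (UNIV :: bool set)"

abbreviation W :: "(nat \<Rightarrow> 'z) \<times> (nat \<Rightarrow> bool) \<times> 'w \<Rightarrow> 'w" where
  "W \<omega> \<equiv> snd (snd \<omega>)"

abbreviation SU :: "nat \<Rightarrow> (nat \<Rightarrow> 'z) \<times> (nat \<Rightarrow> bool) \<times> 'w \<Rightarrow> ('z \<times> 'z) \<times> bool" where
  "SU i \<omega> \<equiv> ((fst \<omega> i, fst \<omega> (i + n)), fst (snd \<omega>) i)"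

abbreviation ghost :: "nat \<Rightarrow> (nat \<Rightarrow> 'z) \<times> (nat \<Rightarrow> bool) \<times> 'w \<Rightarrow> 'z" where
  "ghost i \<omega> \<equiv> fst \<omega> (if fst (snd \<omega>) i then i else i + n)"

lemma prob_space_PZt: "prob_space PZt"
  by (intro prob_space_PiM prob_space_PZ)

lemma prob_space_PU: "prob_space PU"
  by (intro prob_space_PiM prob_space_measure_pmf)

lemma measurable_K_sel[measurable]:
  "(\<lambda>p. K (sel_sample n (fst p) (snd p))) \<in> PZt \<Otimes>\<^sub>M PU \<rightarrow>\<^sub>M subprob_algebra borel"
  by (rule measurable_prob_algebraD, rule measurable_compose[OF measurable_sel_sample K_measurable])

lemma K_sel_space:
  assumes "zt \<in> space PZt" "u \<in> space PU"
  shows "prob_space (K (sel_sample n zt u))" "sets (K (sel_sample n zt u)) = sets borel"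
  using measurable_space[OF measurable_compose[OF measurable_sel_sample K_measurable], of "(zt, u)"] assms
  by (simp_all add: space_pair_measure space_prob_algebra)

lemma measurable_weights_kernel:
  "(\<lambda>p. K (sel_sample n (fst p) (snd p)) \<bind> (\<lambda>w. return \<Omega> (fst p, snd p, w))) \<in> PZt \<Otimes>\<^sub>M PU \<rightarrow>\<^sub>M subprob_algebra \<Omega>"
  by measurable

lemma measurable_coins_weights_kernel:
  "(\<lambda>zt. PU \<bind> (\<lambda>u. K (sel_sample n zt u) \<bind> (\<lambda>w. return \<Omega> (zt, u, w)))) \<in> PZt \<rightarrow>\<^sub>M subprob_algebra \<Omega>"
proof (rule measurable_bind[OF measurable_const])
  show "PU \<in> space (subprob_algebra PU)"
    by (simp add: space_subprob_algebra prob_space_PU prob_space_imp_subprob_space)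
qed (use measurable_weights_kernel in simp)

lemma sets_PZUW[measurable_cong]: "sets PZUW = sets \<Omega>"
  unfolding supersample_space_def
  by (rule sets_bind[OF sets_kernel[OF measurable_coins_weights_kernel] prob_space.not_empty[OF prob_space_PZt]])

lemma nn_integral_PZUW:
  assumes f: "f \<in> borel_measurable \<Omega>"
  shows "(\<integral>\<^sup>+\<omega>. f \<omega> \<partial>PZUW) = (\<integral>\<^sup>+zt. \<integral>\<^sup>+u. \<integral>\<^sup>+w. f (zt, u, w) \<partial>K (sel_sample n zt u) \<partial>PU \<partial>PZt)"
  unfolding supersample_space_def nn_integral_bind[OF f measurable_coins_weights_kernel]
proof (intro nn_integral_cong)
  fix zt assume zt: "zt \<in> space PZt"
  have kernel: "(\<lambda>u. K (sel_sample n zt u) \<bind> (\<lambda>w. return \<Omega> (zt, u, w))) \<in> PU \<rightarrow>\<^sub>M subprob_algebra \<Omega>"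
    using measurable_compose[OF measurable_Pair1'[OF zt] measurable_weights_kernel] by simp
  show "(\<integral>\<^sup>+\<omega>. f \<omega> \<partial>(PU \<bind> (\<lambda>u. K (sel_sample n zt u) \<bind> (\<lambda>w. return \<Omega> (zt, u, w))))) =
      (\<integral>\<^sup>+u. \<integral>\<^sup>+w. f (zt, u, w) \<partial>K (sel_sample n zt u) \<partial>PU)"
    unfolding nn_integral_bind[OF f kernel]
  proof (intro nn_integral_cong)
    fix u assume u: "u \<in> space PU"
    have "(\<lambda>w. (zt, u, w)) \<in> borel \<rightarrow>\<^sub>M \<Omega>"
      using zt u by measurable
    then have return: "(\<lambda>w. return \<Omega> (zt, u, w)) \<in> K (sel_sample n zt u) \<rightarrow>\<^sub>M subprob_algebra \<Omega>"
      unfolding measurable_cong_sets[OF K_sel_space(2)[OF zt u] refl]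
      by (rule measurable_compose[OF _ return_measurable])
    have "(\<integral>\<^sup>+w. \<integral>\<^sup>+\<omega>. f \<omega> \<partial>return \<Omega> (zt, u, w) \<partial>K (sel_sample n zt u)) = (\<integral>\<^sup>+w. f (zt, u, w) \<partial>K (sel_sample n zt u))"
      using zt u f by (intro nn_integral_cong nn_integral_return) (auto simp: space_pair_measure)
    then show "(\<integral>\<^sup>+\<omega>. f \<omega> \<partial>(K (sel_sample n zt u) \<bind> (\<lambda>w. return \<Omega> (zt, u, w)))) =
        (\<integral>\<^sup>+w. f (zt, u, w) \<partial>K (sel_sample n zt u))"
      by (simp add: nn_integral_bind[OF f return])
  qed
qed

lemma measurable_samples_coins[measurable]: "(\<lambda>\<omega>. (fst \<omega>, fst (snd \<omega>))) \<in> \<Omega> \<rightarrow>\<^sub>M PZt \<Otimes>\<^sub>M PU"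
  by measurable

lemma measurable_samples_coins_comp:
  "g \<in> PZt \<Otimes>\<^sub>M PU \<rightarrow>\<^sub>M N \<Longrightarrow> (\<lambda>\<omega>. g (fst \<omega>, fst (snd \<omega>))) \<in> PZUW \<rightarrow>\<^sub>M N"
  using measurable_compose[OF measurable_samples_coins] by (simp add: measurable_cong_sets[OF sets_PZUW refl])

lemma nn_integral_PZUW_samples_coins:
  assumes f: "(\<lambda>p. f (fst p) (snd p)) \<in> borel_measurable (PZt \<Otimes>\<^sub>M PU)"
  shows "(\<integral>\<^sup>+\<omega>. f (fst \<omega>) (fst (snd \<omega>)) \<partial>PZUW) = (\<integral>\<^sup>+zt. \<integral>\<^sup>+u. f zt u \<partial>PU \<partial>PZt)"
  using measurable_compose[OF measurable_samples_coins f]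
  by (simp add: nn_integral_PZUW K_sel_space prob_space.emeasure_space_1 cong: nn_integral_cong)

lemma prob_space_PZUW: "prob_space PZUW"
proof (rule prob_spaceI)
  have "emeasure PZUW (space PZUW) = (\<integral>\<^sup>+zt. \<integral>\<^sup>+u. 1 \<partial>PU \<partial>PZt)"
    using nn_integral_PZUW_samples_coins[of "\<lambda>_ _. 1"] by simp
  then show "emeasure PZUW (space PZUW) = 1"
    by (simp add: prob_space.emeasure_space_1 prob_space_PU prob_space_PZt)
qed

lemma nn_integral_PZUW_coins_first:
  assumes f[measurable]: "f \<in> borel_measurable \<Omega>"
  shows "(\<integral>\<^sup>+\<omega>. f \<omega> \<partial>PZUW) = (\<integral>\<^sup>+u. \<integral>\<^sup>+zt. \<integral>\<^sup>+w. f (zt, u, w) \<partial>K (sel_sample n zt u) \<partial>PZt \<partial>PU)"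
proof -
  interpret pair_sigma_finite PZt PU
    by (intro pair_sigma_finite.intro prob_space_imp_sigma_finite prob_space_PZt prob_space_PU)
  have "(\<lambda>p. \<integral>\<^sup>+w. f (fst p, snd p, w) \<partial>K (sel_sample n (fst p) (snd p))) \<in> borel_measurable (PZt \<Otimes>\<^sub>M PU)"
    by (rule nn_integral_measurable_subprob_algebra2[OF _ measurable_K_sel]) measurable
  then show ?thesis
    by (simp add: nn_integral_PZUW Fubini'[symmetric] case_prod_beta')
qed

lemma measurable_SU:
  assumes [arith]: "i < n"
  shows "(\<lambda>p. ((fst p i, fst p (i + n)), snd p i)) \<in> PZt \<Otimes>\<^sub>M PU \<rightarrow>\<^sub>M SU_space"
    and "(\<lambda>p. ((fst p i, fst p (i + n)), \<not> snd p i)) \<in> PZt \<Otimes>\<^sub>M PU \<rightarrow>\<^sub>M SU_space"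
proof -
  show SU: "(\<lambda>p. ((fst p i, fst p (i + n)), snd p i)) \<in> PZt \<Otimes>\<^sub>M PU \<rightarrow>\<^sub>M SU_space"
    by measurable
  have "(\<lambda>x. (fst x, \<not> snd x)) \<in> SU_space \<rightarrow>\<^sub>M SU_space"
    by measurable
  from measurable_compose[OF SU this]
  show "(\<lambda>p. ((fst p i, fst p (i + n)), \<not> snd p i)) \<in> PZt \<Otimes>\<^sub>M PU \<rightarrow>\<^sub>M SU_space"
    by simp
qed

lemma nn_integral_PU_flip:
  assumes "i < n"
  shows "(\<integral>\<^sup>+u. \<phi> (\<not> u i) \<partial>PU) = (\<integral>\<^sup>+u. \<phi> (u i) \<partial>PU)"
proof -
  have component: "(\<integral>\<^sup>+u. \<psi> (u i) \<partial>PU) = (\<integral>\<^sup>+b. \<psi> b \<partial>fair_coin)" for \<psi>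
  proof -
    have "(\<lambda>u. u i) \<in> PU \<rightarrow>\<^sub>M fair_coin"
      using assms by (intro measurable_component_singleton) simp
    then have "(\<integral>\<^sup>+u. \<psi> (u i) \<partial>PU) = (\<integral>\<^sup>+b. \<psi> b \<partial>distr PU fair_coin (\<lambda>u. u i))"
      by (simp add: nn_integral_distr)
    also have "distr PU fair_coin (\<lambda>u. u i) = fair_coin"
      using assms by (intro distr_PiM_component) (auto intro: prob_space_measure_pmf)
    finally show ?thesis .
  qed
  have "(\<integral>\<^sup>+b. \<phi> (\<not> b) \<partial>fair_coin) = (\<integral>\<^sup>+b. \<phi> b \<partial>fair_coin)"
    by (subst (1 2) nn_integral_measure_pmf_support[of UNIV]) (auto simp: UNIV_bool add.commute)
  then show ?thesis
    by (simp add: component[of "\<lambda>b. \<phi> (\<not> b)"] component[of \<phi>])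
qed

lemma emeasure_distr_samples_coins:
  assumes g: "g \<in> PZt \<Otimes>\<^sub>M PU \<rightarrow>\<^sub>M N" and A: "A \<in> sets N"
  shows "emeasure (distr PZUW N (\<lambda>\<omega>. g (fst \<omega>, fst (snd \<omega>)))) A = (\<integral>\<^sup>+zt. \<integral>\<^sup>+u. indicator A (g (zt, u)) \<partial>PU \<partial>PZt)"
proof -
  have "(\<lambda>p. indicator A (g (fst p, snd p)) :: ennreal) \<in> borel_measurable (PZt \<Otimes>\<^sub>M PU)"
    using measurable_compose[OF g borel_measurable_indicator[OF A]] by simp
  from nn_integral_PZUW_samples_coins[of "\<lambda>zt u. indicator A (g (zt, u))", OF this] show ?thesis
    using A by (simp add: emeasure_distr_nn_integral[OF measurable_samples_coins_comp[OF g]])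
qed

lemma distr_SU_flip:
  assumes i: "i < n"
  shows "distr PZUW SU_space (\<lambda>\<omega>. ((fst \<omega> i, fst \<omega> (i + n)), \<not> fst (snd \<omega>) i)) = distr PZUW SU_space (SU i)"
proof (rule measure_eqI)
  fix A assume "A \<in> sets (distr PZUW SU_space (\<lambda>\<omega>. ((fst \<omega> i, fst \<omega> (i + n)), \<not> fst (snd \<omega>) i)))"
  then have A: "A \<in> sets SU_space"
    by simp
  show "emeasure (distr PZUW SU_space (\<lambda>\<omega>. ((fst \<omega> i, fst \<omega> (i + n)), \<not> fst (snd \<omega>) i))) A =
        emeasure (distr PZUW SU_space (SU i)) A"
    using emeasure_distr_samples_coins[OF measurable_SU(2)[OF i] A]
      emeasure_distr_samples_coins[OF measurable_SU(1)[OF i] A]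
      nn_integral_PU_flip[OF i, where \<phi>="\<lambda>b. indicator A ((_ i, _ (i + n)), b)"]
    by simp
qed simp

lemma integral_odd_SU:
  fixes h :: "('z \<times> 'z) \<times> bool \<Rightarrow> real"
  assumes i: "i < n" and h: "h \<in> borel_measurable SU_space" and odd: "\<And>s u. h (s, \<not> u) = - h (s, u)"
  shows "(\<integral>\<omega>. h (SU i \<omega>) \<partial>PZUW) = 0"
proof -
  have "(\<integral>\<omega>. h ((fst \<omega> i, fst \<omega> (i + n)), \<not> fst (snd \<omega>) i) \<partial>PZUW) = (\<integral>\<omega>. h (SU i \<omega>) \<partial>PZUW)"
    using integral_distr[OF measurable_samples_coins_comp[OF measurable_SU(2)[OF i]] h]
      integral_distr[OF measurable_samples_coins_comp[OF measurable_SU(1)[OF i]] h] distr_SU_flip[OF i]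
    by simp
  then show ?thesis
    by (simp add: odd)
qed

lemma measurable_ghost:
  assumes "i < n"
  shows "(\<lambda>p. fst p (if snd p i then i else i + n)) \<in> PZt \<Otimes>\<^sub>M PU \<rightarrow>\<^sub>M PZ"
proof -
  have [simp]: "i < n" "i < 2 * n" "i + n < 2 * n"
    using assms by simp_all
  show ?thesis
    by measurable
qed

lemma measurable_sel_sample_coins:
  "u \<in> space PU \<Longrightarrow> (\<lambda>zt. sel_sample n zt u) \<in> PZt \<rightarrow>\<^sub>M PiM {..<n} (\<lambda>_. PZ)"
  using measurable_compose[OF measurable_Pair2' measurable_sel_sample] by simp

lemma nn_integral_ghost_sel_sample:
  assumes i: "i < n" and u: "u \<in> space PU"
    and \<phi>: "\<phi> \<in> borel_measurable PZ" and F: "F \<in> borel_measurable (PiM {..<n} (\<lambda>_. PZ))"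
  shows "(\<integral>\<^sup>+zt. \<phi> (zt (if u i then i else i + n)) * F (sel_sample n zt u) \<partial>PZt) =
         (\<integral>\<^sup>+z. \<phi> z \<partial>PZ) * (\<integral>\<^sup>+zt. F (sel_sample n zt u) \<partial>PZt)"
proof -
  interpret product_prob_space "\<lambda>_. PZ" "{..<2*n}"
    by (intro product_prob_spaceI prob_space_PZ)
  let ?j = "if u i then i else i + n"
  show ?thesis
  proof (rule nn_integral_PiM_mult_indep_component)
    show "?j \<in> {..<2*n}"
      using i by simp
    show "(\<lambda>zt. F (sel_sample n zt u)) \<in> borel_measurable PZt"
      by (rule measurable_compose[OF measurable_sel_sample_coins[OF u] F])
    show "F (sel_sample n (zt(?j := y)) u) = F (sel_sample n zt u)" for zt y
      using i by (auto simp: sel_sample_def intro!: arg_cong[where f=F])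
  qed (use \<phi> in simp_all)
qed

lemma measurable_W_ghost:
  assumes "i < n"
  shows "(\<lambda>\<omega>. (W \<omega>, ghost i \<omega>)) \<in> PZUW \<rightarrow>\<^sub>M borel \<Otimes>\<^sub>M PZ"
proof (rule measurable_Pair)
  show "ghost i \<in> PZUW \<rightarrow>\<^sub>M PZ"
    using measurable_compose[OF measurable_samples_coins measurable_ghost[OF assms]]
    by (simp add: measurable_cong_sets[OF sets_PZUW refl])
qed measurable

lemma distr_W_ghost:
  assumes i: "i < n"
  shows "distr PZUW borel W \<Otimes>\<^sub>M PZ = distr PZUW (borel \<Otimes>\<^sub>M PZ) (\<lambda>\<omega>. (W \<omega>, ghost i \<omega>))"
proof (rule pair_measure_eqI)
  have W: "W \<in> PZUW \<rightarrow>\<^sub>M borel"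
    by measurable
  show "sigma_finite_measure (distr PZUW borel W)"
    by (intro prob_space_imp_sigma_finite prob_space.prob_space_distr[OF prob_space_PZUW W])
  show "sigma_finite_measure PZ"
    by (rule prob_space_imp_sigma_finite[OF prob_space_PZ])
  fix A B assume "A \<in> sets (distr PZUW borel W)" and B: "B \<in> sets PZ"
  then have A: "A \<in> sets borel"
    by simp
  define G where "G zt u = emeasure (K (sel_sample n zt u)) A" for zt u
  have K_indicator: "(\<integral>\<^sup>+w. c * indicator A w \<partial>K (sel_sample n zt u)) = c * G zt u"
    if "zt \<in> space PZt" "u \<in> space PU" for c zt u
    using A K_sel_space(2)[OF that] by (simp add: G_def nn_integral_cmult)
  have F: "(\<lambda>s. emeasure (K s) A) \<in> borel_measurable (PiM {..<n} (\<lambda>_. PZ))"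
    using measurable_prob_algebraD[OF K_measurable] measurable_emeasure_subprob_algebra[OF A]
    by (rule measurable_compose)
  have G_meas: "(\<lambda>zt. G zt u) \<in> borel_measurable PZt" if "u \<in> space PU" for u
    unfolding G_def using measurable_sel_sample_coins[OF that] F by (rule measurable_compose)
  have "emeasure (distr PZUW (borel \<Otimes>\<^sub>M PZ) (\<lambda>\<omega>. (W \<omega>, ghost i \<omega>))) (A \<times> B)
      = (\<integral>\<^sup>+\<omega>. indicator B (ghost i \<omega>) * indicator A (W \<omega>) \<partial>PZUW)"
    using A B by (simp add: emeasure_distr_nn_integral[OF measurable_W_ghost[OF i]] indicator_times mult.commute)
  also have "\<dots> = (\<integral>\<^sup>+u. \<integral>\<^sup>+zt. indicator B (zt (if u i then i else i + n)) * G zt u \<partial>PZt \<partial>PU)"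
    using A B measurable_compose[OF measurable_samples_coins measurable_ghost[OF i]]
    by (simp add: nn_integral_PZUW_coins_first K_indicator cong: nn_integral_cong)
  also have "\<dots> = (\<integral>\<^sup>+u. emeasure PZ B * (\<integral>\<^sup>+zt. G zt u \<partial>PZt) \<partial>PU)"
    using nn_integral_ghost_sel_sample[OF i _ borel_measurable_indicator[OF B] F] B
    by (intro nn_integral_cong) (simp add: G_def)
  also have "\<dots> = (\<integral>\<^sup>+u. \<integral>\<^sup>+zt. emeasure PZ B * G zt u \<partial>PZt \<partial>PU)"
    using G_meas by (intro nn_integral_cong) (simp add: nn_integral_cmult)
  also have "\<dots> = (\<integral>\<^sup>+\<omega>. emeasure PZ B * indicator A (W \<omega>) \<partial>PZUW)"
    using A by (simp add: nn_integral_PZUW_coins_first K_indicator cong: nn_integral_cong)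
  also have "\<dots> = emeasure (distr PZUW borel W) A * emeasure PZ B"
    using A by (simp add: nn_integral_cmult emeasure_distr_nn_integral[OF W] mult.commute)
  finally show "emeasure (distr PZUW borel W) A * emeasure PZ B =
      emeasure (distr PZUW (borel \<Otimes>\<^sub>M PZ) (\<lambda>\<omega>. (W \<omega>, ghost i \<omega>))) (A \<times> B)" ..
qed simp

lemma distr_pair_W_eq_W_ghost:
  assumes i: "i < n"
  shows "distr (PZUW \<Otimes>\<^sub>M PZ) (borel \<Otimes>\<^sub>M PZ) (\<lambda>(\<omega>, z). (W \<omega>, z)) =
         distr PZUW (borel \<Otimes>\<^sub>M PZ) (\<lambda>\<omega>. (W \<omega>, ghost i \<omega>))"
proof -
  have "distr PZUW borel W \<Otimes>\<^sub>M distr PZ PZ (\<lambda>z. z) = distr (PZUW \<Otimes>\<^sub>M PZ) (borel \<Otimes>\<^sub>M PZ) (\<lambda>(\<omega>, z). (W \<omega>, z))"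
    using prob_space_PZUW prob_space_PZ
    by (intro pair_measure_distr) (auto intro: prob_space_imp_sigma_finite)
  then show ?thesis
    using distr_W_ghost[OF i] by simp
qed

lemma integral_loss_ghost:
  fixes loss :: "'w \<Rightarrow> 'z \<Rightarrow> real"
  assumes i: "i < n"
    and loss: "case_prod loss \<in> borel_measurable (borel \<Otimes>\<^sub>M PZ)"
    and int_pop: "integrable (PZUW \<Otimes>\<^sub>M PZ) (\<lambda>(\<omega>, z). loss (W \<omega>) z)"
  shows "integrable PZUW (\<lambda>\<omega>. loss (W \<omega>) (ghost i \<omega>))"
    and "(\<integral>\<omega>. loss (W \<omega>) (ghost i \<omega>) \<partial>PZUW) = (\<integral>\<omega>. (\<integral>z. loss (W \<omega>) z \<partial>PZ) \<partial>PZUW)"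
proof -
  interpret pair_sigma_finite PZUW PZ
    by (intro pair_sigma_finite.intro prob_space_imp_sigma_finite prob_space_PZUW prob_space_PZ)
  have W_id: "(\<lambda>(\<omega>, z). (W \<omega>, z)) \<in> PZUW \<Otimes>\<^sub>M PZ \<rightarrow>\<^sub>M borel \<Otimes>\<^sub>M PZ"
    by measurable
  have "integrable (distr (PZUW \<Otimes>\<^sub>M PZ) (borel \<Otimes>\<^sub>M PZ) (\<lambda>(\<omega>, z). (W \<omega>, z))) (case_prod loss)"
    unfolding integrable_distr_eq[OF W_id loss] using int_pop by (simp add: case_prod_beta')
  then show "integrable PZUW (\<lambda>\<omega>. loss (W \<omega>) (ghost i \<omega>))"
    unfolding distr_pair_W_eq_W_ghost[OF i] integrable_distr_eq[OF measurable_W_ghost[OF i] loss] by simp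
  have "(\<integral>\<omega>. loss (W \<omega>) (ghost i \<omega>) \<partial>PZUW) = (\<integral>p. case_prod loss p \<partial>distr PZUW (borel \<Otimes>\<^sub>M PZ) (\<lambda>\<omega>. (W \<omega>, ghost i \<omega>)))"
    unfolding integral_distr[OF measurable_W_ghost[OF i] loss] by simp
  also have "\<dots> = (\<integral>(\<omega>, z). loss (W \<omega>) z \<partial>(PZUW \<Otimes>\<^sub>M PZ))"
    unfolding distr_pair_W_eq_W_ghost[OF i, symmetric] integral_distr[OF W_id loss] by (simp add: case_prod_beta')
  also have "\<dots> = (\<integral>\<omega>. (\<integral>z. loss (W \<omega>) z \<partial>PZ) \<partial>PZUW)"
    using integral_fst'[OF int_pop] by simp
  finally show "(\<integral>\<omega>. loss (W \<omega>) (ghost i \<omega>) \<partial>PZUW) = (\<integral>\<omega>. (\<integral>z. loss (W \<omega>) z \<partial>PZ) \<partial>PZUW)" .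
qed

lemma abs_integral_odd_le_kernel_diff:
  fixes G :: "('z \<times> 'z) \<times> bool \<Rightarrow> 'w \<Rightarrow> real" and \<kappa> :: "('z \<times> 'z) \<times> bool \<Rightarrow> 'w measure"
    and \<mu> :: "'z \<times> 'z \<Rightarrow> 'w measure"
  assumes i: "i < n"
    and G: "case_prod G \<in> borel_measurable (SU_space \<Otimes>\<^sub>M borel)"
    and odd: "\<And>s u w. G (s, \<not> u) w = - G (s, u) w"
    and \<kappa>: "is_cond_distr PZUW SU_space (SU i) borel W \<kappa>"
    and \<mu>: "\<mu> \<in> PZ \<Otimes>\<^sub>M PZ \<rightarrow>\<^sub>M prob_algebra borel"
    and int: "integrable PZUW (\<lambda>\<omega>. G (SU i \<omega>) (W \<omega>))"
  shows "ennreal \<bar>\<integral>\<omega>. G (SU i \<omega>) (W \<omega>) \<partial>PZUW\<bar> \<le>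
    (\<integral>\<^sup>+\<omega>. ennreal \<bar>(\<integral>w. G (SU i \<omega>) w \<partial>\<kappa> (SU i \<omega>)) - (\<integral>w. G (SU i \<omega>) w \<partial>\<mu> (fst \<omega> i, fst \<omega> (i + n)))\<bar> \<partial>PZUW)"
proof -
  define h\<kappa> where "h\<kappa> = (\<lambda>\<omega>. \<integral>w. G (SU i \<omega>) w \<partial>\<kappa> (SU i \<omega>))"
  define h\<mu> where "h\<mu> x = (\<integral>w. G x w \<partial>\<mu> (fst x))" for x
  have tower: "integrable PZUW h\<kappa>" "(\<integral>\<omega>. G (SU i \<omega>) (W \<omega>) \<partial>PZUW) = (\<integral>\<omega>. h\<kappa> \<omega> \<partial>PZUW)"
    using integral_cond_distr[OF prob_space_PZUW \<kappa> G] int by (simp_all add: h\<kappa>_def)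
  have h\<mu>: "h\<mu> \<in> borel_measurable SU_space"
    unfolding h\<mu>_def
    by (rule integral_measurable_subprob_algebra2[where f=G and N=borel])
       (use G \<mu> in \<open>simp_all add: measurable_prob_algebraD\<close>)
  have "(\<integral>\<omega>. h\<mu> (SU i \<omega>) \<partial>PZUW) = 0"
    using i h\<mu> by (rule integral_odd_SU) (simp add: h\<mu>_def odd)
  then have "ennreal \<bar>\<integral>\<omega>. h\<kappa> \<omega> \<partial>PZUW\<bar> \<le> (\<integral>\<^sup>+\<omega>. ennreal \<bar>h\<kappa> \<omega> - h\<mu> (SU i \<omega>)\<bar> \<partial>PZUW)"
    using tower(1) measurable_compose[OF measurable_samples_coins_comp[OF measurable_SU(1)[OF i]] h\<mu>]
    by (intro abs_integral_le_nn_integral_abs_diff) simp_all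
  then show ?thesis
    by (simp add: tower(2) h\<kappa>_def h\<mu>_def)
qed

lemma abs_integral_loss_gap_le_wasserstein1:
  fixes loss :: "'w \<Rightarrow> 'z \<Rightarrow> real" and \<kappa> :: "('z \<times> 'z) \<times> bool \<Rightarrow> 'w measure"
    and \<mu> :: "'z \<times> 'z \<Rightarrow> 'w measure"
  assumes i: "i < n"
    and loss: "case_prod loss \<in> borel_measurable (borel \<Otimes>\<^sub>M PZ)"
    and lip: "\<forall>z\<in>space PZ. L-lipschitz_on UNIV (\<lambda>w. loss w z)"
    and \<kappa>: "is_cond_distr PZUW SU_space (SU i) borel W \<kappa>"
    and \<mu>: "\<mu> \<in> PZ \<Otimes>\<^sub>M PZ \<rightarrow>\<^sub>M prob_algebra borel"
    and int: "integrable PZUW (\<lambda>\<omega>. loss_gap loss (SU i \<omega>) (W \<omega>))"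
  shows "ennreal \<bar>\<integral>\<omega>. loss_gap loss (SU i \<omega>) (W \<omega>) \<partial>PZUW\<bar>
      \<le> ennreal (2 * L) * (\<integral>\<^sup>+\<omega>. wasserstein1 (\<kappa> (SU i \<omega>)) (\<mu> (fst \<omega> i, fst \<omega> (i + n))) \<partial>PZUW)"
proof -
  have gap: "case_prod (loss_gap loss) \<in> borel_measurable (SU_space \<Otimes>\<^sub>M borel)"
    using loss by (rule measurable_loss_gap)
  have SU: "SU i \<in> PZUW \<rightarrow>\<^sub>M SU_space"
    using measurable_samples_coins_comp[OF measurable_SU(1)[OF i]] by simp
  have \<kappa>_prob: "\<kappa> \<in> SU_space \<rightarrow>\<^sub>M prob_algebra borel"
    using \<kappa> by (simp add: is_cond_distr_def)
  note abs_integral_odd_le_kernel_diff[OF i gap loss_gap_flip \<kappa> \<mu> int]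
  also have "(\<integral>\<^sup>+\<omega>. ennreal \<bar>(\<integral>w. loss_gap loss (SU i \<omega>) w \<partial>\<kappa> (SU i \<omega>))
      - (\<integral>w. loss_gap loss (SU i \<omega>) w \<partial>\<mu> (fst \<omega> i, fst \<omega> (i + n)))\<bar> \<partial>PZUW)
    \<le> ennreal (2 * L) * (\<integral>\<^sup>+\<omega>. wasserstein1 (\<kappa> (SU i \<omega>)) (\<mu> (fst \<omega> i, fst \<omega> (i + n))) \<partial>PZUW)"
  proof (rule nn_integral_le_ennreal_cmult)
    have h\<kappa>: "(\<lambda>x. \<integral>w. loss_gap loss x w \<partial>\<kappa> x) \<in> borel_measurable SU_space"
      by (rule integral_measurable_subprob_algebra2[where N=borel])
         (use gap \<kappa>_prob in \<open>simp_all add: measurable_prob_algebraD\<close>)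
    have h\<mu>: "(\<lambda>x. \<integral>w. loss_gap loss x w \<partial>\<mu> (fst x)) \<in> borel_measurable SU_space"
      by (rule integral_measurable_subprob_algebra2[where N=borel])
         (use gap \<mu> in \<open>simp_all add: measurable_prob_algebraD\<close>)
    have "(\<lambda>\<omega>. (\<integral>w. loss_gap loss (SU i \<omega>) w \<partial>\<kappa> (SU i \<omega>))
        - (\<integral>w. loss_gap loss (SU i \<omega>) w \<partial>\<mu> (fst \<omega> i, fst \<omega> (i + n)))) \<in> borel_measurable PZUW"
      using borel_measurable_diff[OF measurable_compose[OF SU h\<kappa>] measurable_compose[OF SU h\<mu>]] by simp
    then show "(\<lambda>\<omega>. ennreal \<bar>(\<integral>w. loss_gap loss (SU i \<omega>) w \<partial>\<kappa> (SU i \<omega>))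
        - (\<integral>w. loss_gap loss (SU i \<omega>) w \<partial>\<mu> (fst \<omega> i, fst \<omega> (i + n)))\<bar>) \<in> borel_measurable PZUW"
      by measurable
    fix \<omega> assume "\<omega> \<in> space PZUW"
    then have SU_\<omega>: "SU i \<omega> \<in> space SU_space"
      by (rule measurable_space[OF SU])
    then have "prob_space (\<kappa> (SU i \<omega>))" "prob_space (\<mu> (fst \<omega> i, fst \<omega> (i + n)))"
      using measurable_space[OF \<kappa>_prob] measurable_space[OF \<mu>] by (auto simp: space_prob_algebra space_pair_measure)
    moreover have "(2 * L)-lipschitz_on UNIV (loss_gap loss (SU i \<omega>))"
      using SU_\<omega> lip by (intro lipschitz_loss_gap) (auto simp: space_pair_measure)
    ultimately show "ennreal \<bar>(\<integral>w. loss_gap loss (SU i \<omega>) w \<partial>\<kappa> (SU i \<omega>))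
        - (\<integral>w. loss_gap loss (SU i \<omega>) w \<partial>\<mu> (fst \<omega> i, fst \<omega> (i + n)))\<bar>
      \<le> ennreal (2 * L) * wasserstein1 (\<kappa> (SU i \<omega>)) (\<mu> (fst \<omega> i, fst \<omega> (i + n)))"
      by (rule lipschitz_integral_diff_le_wasserstein1)
  qed
  finally show ?thesis .
qed

lemma loss_gap_SU:
  "i < n \<Longrightarrow> loss_gap loss (SU i \<omega>) (W \<omega>) = loss (W \<omega>) (ghost i \<omega>) - loss (W \<omega>) (sel_sample n (fst \<omega>) (fst (snd \<omega>)) i)"
  by (simp add: loss_gap_def sel_sample_def)

lemma expected_gen_eq_mean_loss_gap:
  fixes loss :: "'w \<Rightarrow> 'z \<Rightarrow> real"
  assumes n: "n > 0"
    and loss: "case_prod loss \<in> borel_measurable (borel \<Otimes>\<^sub>M PZ)"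
    and int_pop: "integrable (PZUW \<Otimes>\<^sub>M PZ) (\<lambda>(\<omega>, z). loss (W \<omega>) z)"
    and int_emp: "\<forall>i<n. integrable PZUW (\<lambda>\<omega>. loss (W \<omega>) (sel_sample n (fst \<omega>) (fst (snd \<omega>)) i))"
  shows "\<forall>i<n. integrable PZUW (\<lambda>\<omega>. loss_gap loss (SU i \<omega>) (W \<omega>))"
    and "(\<integral>\<omega>. (\<integral>z. loss (W \<omega>) z \<partial>PZ) - (1 / real n) * (\<Sum>i<n. loss (W \<omega>) (sel_sample n (fst \<omega>) (fst (snd \<omega>)) i)) \<partial>PZUW)
         = (1 / real n) * (\<Sum>i<n. \<integral>\<omega>. loss_gap loss (SU i \<omega>) (W \<omega>) \<partial>PZUW)"
proof -
  interpret pair_sigma_finite PZUW PZ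
    by (intro pair_sigma_finite.intro prob_space_imp_sigma_finite prob_space_PZUW prob_space_PZ)
  let ?pop = "\<lambda>\<omega>. \<integral>z. loss (W \<omega>) z \<partial>PZ"
  let ?emp = "\<lambda>i \<omega>. loss (W \<omega>) (sel_sample n (fst \<omega>) (fst (snd \<omega>)) i)"
  have gap: "integrable PZUW (\<lambda>\<omega>. loss_gap loss (SU i \<omega>) (W \<omega>)) \<and>
      (\<integral>\<omega>. loss_gap loss (SU i \<omega>) (W \<omega>) \<partial>PZUW) = (\<integral>\<omega>. ?pop \<omega> \<partial>PZUW) - (\<integral>\<omega>. ?emp i \<omega> \<partial>PZUW)"
    if i: "i < n" for i
    using integral_loss_ghost[OF i loss int_pop] int_emp i by (simp add: loss_gap_SU)
  then show "\<forall>i<n. integrable PZUW (\<lambda>\<omega>. loss_gap loss (SU i \<omega>) (W \<omega>))"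
    by blast
  have "(\<integral>\<omega>. ?pop \<omega> - (1 / real n) * (\<Sum>i<n. ?emp i \<omega>) \<partial>PZUW)
      = (\<integral>\<omega>. ?pop \<omega> \<partial>PZUW) - (1 / real n) * (\<Sum>i<n. \<integral>\<omega>. ?emp i \<omega> \<partial>PZUW)"
    using integrable_fst'[OF int_pop] int_emp by (intro integral_diff_mean) simp_all
  also have "\<dots> = (1 / real n) * (\<Sum>i<n. (\<integral>\<omega>. ?pop \<omega> \<partial>PZUW) - (\<integral>\<omega>. ?emp i \<omega> \<partial>PZUW))"
    using n by (simp add: sum_subtractf field_simps)
  also have "\<dots> = (1 / real n) * (\<Sum>i<n. \<integral>\<omega>. loss_gap loss (SU i \<omega>) (W \<omega>) \<partial>PZUW)"
    using gap by simp
  finally show "(\<integral>\<omega>. ?pop \<omega> - (1 / real n) * (\<Sum>i<n. ?emp i \<omega>) \<partial>PZUW)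
      = (1 / real n) * (\<Sum>i<n. \<integral>\<omega>. loss_gap loss (SU i \<omega>) (W \<omega>) \<partial>PZUW)" .
qed

end

theorem theorem3:
  fixes PZ :: "'z measure"
    and n :: nat
    and K :: "(nat \<Rightarrow> 'z) \<Rightarrow> 'w::polish_space measure"
    and loss :: "'w \<Rightarrow> 'z \<Rightarrow> real"
    and L :: real
    and kappa :: "nat \<Rightarrow> ('z \<times> 'z) \<times> bool \<Rightarrow> 'w measure"
    and mu :: "nat \<Rightarrow> 'z \<times> 'z \<Rightarrow> 'w measure"
  defines "J \<equiv> supersample_space PZ n K"
  assumes PZ: "prob_space PZ"
    and n_pos: "n > 0"
    and K_meas: "K \<in> measurable (PiM {..<n} (\<lambda>_. PZ)) (prob_algebra borel)"
    and loss_meas: "(\<lambda>(w, z). loss w z) \<in> borel_measurable (borel \<Otimes>\<^sub>M PZ)"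
    and lip: "\<forall>z\<in>space PZ. L-lipschitz_on UNIV (\<lambda>w. loss w z)"
    and int_pop: "integrable (J \<Otimes>\<^sub>M PZ) (\<lambda>(\<omega>, z). loss (snd (snd \<omega>)) z)"
    and int_emp: "\<forall>i<n. integrable J
                   (\<lambda>\<omega>. loss (snd (snd \<omega>)) (sel_sample n (fst \<omega>) (fst (snd \<omega>)) i))"
    and kappa: "\<forall>i<n. is_cond_distr J ((PZ \<Otimes>\<^sub>M PZ) \<Otimes>\<^sub>M count_space UNIV)
                   (\<lambda>\<omega>. ((fst \<omega> i, fst \<omega> (i + n)), fst (snd \<omega>) i)) borel (\<lambda>\<omega>. snd (snd \<omega>)) (kappa i)"
    and mu: "\<forall>i<n. is_cond_distr J (PZ \<Otimes>\<^sub>M PZ)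
                   (\<lambda>\<omega>. (fst \<omega> i, fst \<omega> (i + n))) borel (\<lambda>\<omega>. snd (snd \<omega>)) (mu i)"
  shows "ennreal \<bar>\<integral>\<omega>. (\<integral>z. loss (snd (snd \<omega>)) z \<partial>PZ)
                  - (1 / real n) * (\<Sum>i<n. loss (snd (snd \<omega>)) (sel_sample n (fst \<omega>) (fst (snd \<omega>)) i)) \<partial>J\<bar>
         \<le> ennreal (2 * L / real n) *
            (\<Sum>i<n. \<integral>\<^sup>+\<omega>. wasserstein1 (kappa i ((fst \<omega> i, fst \<omega> (i + n)), fst (snd \<omega>) i))
                                         (mu i (fst \<omega> i, fst \<omega> (i + n))) \<partial>J)"
proof -
  interpret supersample PZ n K
    by (rule supersample.intro[OF PZ K_meas])
  note gen = expected_gen_eq_mean_loss_gap[OF n_pos loss_meas int_pop[unfolded J_def] int_emp[unfolded J_def]]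
  have "ennreal \<bar>\<integral>\<omega>. loss_gap loss (SU i \<omega>) (W \<omega>) \<partial>J\<bar>
      \<le> ennreal (2 * L) * (\<integral>\<^sup>+\<omega>. wasserstein1 (kappa i (SU i \<omega>)) (mu i (fst \<omega> i, fst \<omega> (i + n))) \<partial>J)"
    if i: "i < n" for i
  proof (unfold J_def, rule abs_integral_loss_gap_le_wasserstein1[OF i loss_meas lip])
    show "is_cond_distr PZUW SU_space (SU i) borel W (kappa i)"
      using kappa i unfolding J_def by blast
    show "mu i \<in> PZ \<Otimes>\<^sub>M PZ \<rightarrow>\<^sub>M prob_algebra borel"
      using mu i by (simp add: is_cond_distr_def)
  qed (use gen(1) i in blast)
  moreover have "0 \<le> 2 * L"
    using lip prob_space.not_empty[OF PZ] lipschitz_on_nonneg by fastforce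
  ultimately show ?thesis
    unfolding J_def gen(2) by (rule ennreal_abs_mean_le)
qed

end
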